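(* Let $X$ and $Y$ be bi-atomic random variables. Then $(X,Y)\in\mathrm{IC}$ if and only if either (i) $X$ and $Y$ have the same support, or (ii) $X$ and $Y$ are independent.
   Context: The support of $X$ is $\{x:\mathbb P(x-\epsilon<X\le x+\epsilon)>0\ \forall\epsilon>0\}$; bi-atomic means the support has exactly two points. $\mathcal L^2$ is the set of non-degenerate real random variables with finite variance. $(X,Y)\in\mathrm{IC}_r$ means $\mathrm{Corr}(X,Y)=\mathrm{Corr}(g(X),g(Y))=r$ for all measurable $g$ with $g(X),g(Y)\in\mathcal L^2$, and $\mathrm{IC}=\bigcup_{r\in[-1,1]}\mathrm{IC}_r$. *)

theory Defs
  imports "HOL-Probability.Probability"
begin

definition support :: "'a measure \<Rightarrow> ('a \<Rightarrow> real) \<Rightarrow> real set" where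
  "support M X = {x. \<forall>e>0. measure M {w \<in> space M. x - e < X w \<and> X w \<le> x + e} > 0}"

definition bi_atomic :: "'a measure \<Rightarrow> ('a \<Rightarrow> real) \<Rightarrow> bool" where
  "bi_atomic M X \<longleftrightarrow> card (support M X) = 2"

definition in_L2 :: "'a measure \<Rightarrow> ('a \<Rightarrow> real) \<Rightarrow> bool" where
  "in_L2 M Z \<longleftrightarrow> Z \<in> borel_measurable M \<and> integrable M (\<lambda>w. (Z w)\<^sup>2)
     \<and> \<not> (\<exists>c. AE w in M. Z w = c)"

definition expect :: "'a measure \<Rightarrow> ('a \<Rightarrow> real) \<Rightarrow> real" where
  "expect M Z = integral\<^sup>L M Z"

definition covar :: "'a measure \<Rightarrow> ('a \<Rightarrow> real) \<Rightarrow> ('a \<Rightarrow> real) \<Rightarrow> real" where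
  "covar M X Y = expect M (\<lambda>w. (X w - expect M X) * (Y w - expect M Y))"

definition corr :: "'a measure \<Rightarrow> ('a \<Rightarrow> real) \<Rightarrow> ('a \<Rightarrow> real) \<Rightarrow> real" where
  "corr M X Y = covar M X Y / sqrt (covar M X X * covar M Y Y)"

definition IC_r :: "'a measure \<Rightarrow> real \<Rightarrow> ('a \<Rightarrow> real) \<Rightarrow> ('a \<Rightarrow> real) \<Rightarrow> bool" where
  "IC_r M r X Y \<longleftrightarrow> in_L2 M X \<and> in_L2 M Y \<and> corr M X Y = r \<and>
     (\<forall>g::real \<Rightarrow> real. g \<in> borel_measurable borel \<and> in_L2 M (g \<circ> X) \<and> in_L2 M (g \<circ> Y)
        \<longrightarrow> corr M (g \<circ> X) (g \<circ> Y) = r)"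

definition IC :: "'a measure \<Rightarrow> ('a \<Rightarrow> real) \<Rightarrow> ('a \<Rightarrow> real) \<Rightarrow> bool" where
  "IC M X Y \<longleftrightarrow> (\<exists>r\<in>{-1..1}. IC_r M r X Y)"

end

theory Submission
  imports Defs
begin

(*
  A random variable X whose support is {a, b} with a < b equals a + (b - a) * indicator A almost
  surely, where A = {X = b}; hence g \<circ> X = g a + (g b - g a) * indicator A for every g.
  Correlation is invariant under affine maps up to the sign of the slopes, so
  corr (g \<circ> X) (g \<circ> Y) = sgn ((g b - g a) * (g d - g c)) * corr X Y whenever g \<circ> X and
  g \<circ> Y are non-degenerate, i.e. g a \<noteq> g b and g c \<noteq> g d. Thus (X, Y) \<in> IC iff corr X Y = 0,
  which for two-point variables is independence, or no Borel g reverses the order of one pair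
  of support points while keeping that of the other; the latter holds exactly when the two
  supports coincide, since otherwise one can move a support point of Y that is not one of X.
*)

lemma bi_atomicE:
  assumes "bi_atomic M X"
  obtains a b where "support M X = {a, b}" "a < b"
proof -
  obtain x y where "support M X = {x, y}" "x \<noteq> y"
    using assms unfolding bi_atomic_def card_2_iff by blast
  then show thesis
    using that[of x y] that[of y x] by (cases "x < y") (auto simp: insert_commute)
qed

context prob_space
begin

lemma indep_var_iff_prob_vimage:
  assumes X: "random_variable N X" and Y: "random_variable N' Y"
  shows "indep_var N X N' Y \<longleftrightarrow> (\<forall>S\<in>sets N. \<forall>T\<in>sets N'.
    prob ((X -` S \<inter> space M) \<inter> (Y -` T \<inter> space M)) = prob (X -` S \<inter> space M) * prob (Y -` T \<inter> space M))"
proof -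
  have "sigma_sets (space M) {X -` S \<inter> space M | S. S \<in> sets N} = {X -` S \<inter> space M | S. S \<in> sets N}"
    "sigma_sets (space M) {Y -` T \<inter> space M | T. T \<in> sets N'} = {Y -` T \<inter> space M | T. T \<in> sets N'}"
    using sets_vimage_algebra2[of X "space M" N] sets_vimage_algebra2[of Y "space M" N'] X Y
    by (auto simp: sets_vimage_algebra measurable_def)
  then show ?thesis
    using X Y unfolding indep_var_eq indep_sets2_eq by (simp add: setcompr_eq_image image_subset_iff measurable_sets)
qed

(* The complement of the support is covered by the countably many null intervals with
   rational end points. *)
lemma AE_in_support:
  assumes [measurable]: "X \<in> borel_measurable M"
  shows "AE w in M. X w \<in> support M X"
proof -
  let ?I = "\<lambda>(p, q). {w \<in> space M. p < X w \<and> X w \<le> q}"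
  define N where "N = {pq \<in> \<rat> \<times> \<rat>. prob (?I pq) = 0}"
  have "countable N"
    unfolding N_def by (rule countable_subset[of _ "\<rat> \<times> \<rat>"]) (auto intro: countable_rat)
  moreover have "AE w in M. w \<notin> ?I pq" if "pq \<in> N" for pq
    using that by (subst prob_eq_0[symmetric]) (auto simp: N_def split: prod.splits)
  ultimately have avoid_null: "AE w in M. \<forall>pq\<in>N. w \<notin> ?I pq"
    by (simp add: AE_ball_countable)
  have in_support: "X w \<in> support M X" if w: "w \<in> space M" and avoid: "\<forall>pq\<in>N. w \<notin> ?I pq" for w
  proof (rule ccontr)
    let ?x = "X w"
    assume "?x \<notin> support M X"
    then obtain e where "e > 0" and null: "prob {v \<in> space M. ?x - e < X v \<and> X v \<le> ?x + e} = 0"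
      unfolding support_def by (auto simp: not_less) (meson antisym measure_nonneg)
    then obtain p q where pq: "p \<in> \<rat>" "?x - e < p" "p < ?x" "q \<in> \<rat>" "?x < q" "q < ?x + e"
      using Rats_dense_in_real[of "?x - e" ?x] Rats_dense_in_real[of ?x "?x + e"] by auto
    then have "prob (?I (p, q)) \<le> prob {v \<in> space M. ?x - e < X v \<and> X v \<le> ?x + e}"
      by (auto intro!: finite_measure_mono)
    with null have "(p, q) \<in> N" using pq by (auto simp: N_def intro: antisym)
    with avoid w pq show False by auto
  qed
  show ?thesis
    using avoid_null by (rule AE_mp) (intro AE_I2 impI in_support)
qed

lemma prob_point_pos_if_finite_support:
  assumes X[measurable]: "X \<in> borel_measurable M"
    and "finite (support M X)" and x: "x \<in> support M X"
  shows "prob {w \<in> space M. X w = x} > 0"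
proof -
  obtain e where "e > 0" and far: "\<forall>y\<in>support M X. y \<noteq> x \<longrightarrow> e \<le> dist x y"
    using finite_set_avoid[OF \<open>finite (support M X)\<close>] by blast
  have "0 < prob {w \<in> space M. x - e/2 < X w \<and> X w \<le> x + e/2}"
    using x \<open>e > 0\<close> by (simp add: support_def)
  also have "\<dots> = prob {w \<in> space M. X w = x}"
  proof (rule finite_measure_eq_AE)
    show "AE w in M. w \<in> {w \<in> space M. x - e/2 < X w \<and> X w \<le> x + e/2} \<longleftrightarrow> w \<in> {w \<in> space M. X w = x}"
      using AE_in_support[OF X] by eventually_elim (use far \<open>e > 0\<close> in \<open>force simp: dist_real_def\<close>)
  qed auto
  finally show ?thesis .
qed

lemma support_doubletonD:
  assumes X[measurable]: "X \<in> borel_measurable M"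
    and support: "support M X = {a, b}" and "a \<noteq> b"
  shows "AE w in M. X w = a \<or> X w = b"
    and "0 < prob {w \<in> space M. X w = b}" "prob {w \<in> space M. X w = b} < 1"
proof -
  show "AE w in M. X w = a \<or> X w = b"
    using AE_in_support[OF X] support by simp
  show "0 < prob {w \<in> space M. X w = b}"
    using prob_point_pos_if_finite_support[of X b] support by simp
  have "prob {w \<in> space M. X w = a} + prob {w \<in> space M. X w = b}
      = prob ({w \<in> space M. X w = a} \<union> {w \<in> space M. X w = b})"
    using \<open>a \<noteq> b\<close> by (intro finite_measure_Union[symmetric]) auto
  also have "\<dots> \<le> 1"
    by simp
  finally show "prob {w \<in> space M. X w = b} < 1"
    using prob_point_pos_if_finite_support[of X a] support by simp
qed

lemma AE_comp_eq_affine_indicator: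
  fixes X :: "'a \<Rightarrow> real" and g :: "real \<Rightarrow> real"
  assumes "AE w in M. X w = a \<or> X w = b" and "a \<noteq> b"
  shows "AE w in M. g (X w) = g a + (g b - g a) * indicator {w \<in> space M. X w = b} w"
  using assms(1) AE_space by eventually_elim (use assms(2) in auto)

lemma
  assumes A: "A \<in> events" and [measurable]: "U \<in> borel_measurable M"
    and U: "AE w in M. U w = \<alpha> + \<beta> * indicator A w"
  shows integrable_affine_indicator: "integrable M U"
    and expectation_affine_indicator: "expectation U = \<alpha> + \<beta> * prob A"
proof -
  have "integrable M (\<lambda>w. \<alpha> + \<beta> * indicator A w :: real)"
    using A by (auto simp: emeasure_eq_measure)
  then show "integrable M U"
    using A U by (subst integrable_cong_AE) auto
  have "expectation U = expectation (\<lambda>w. \<alpha> + \<beta> * indicator A w)"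
    using A U by (intro integral_cong_AE) auto
  also have "\<dots> = \<alpha> + \<beta> * prob A"
    using A by (simp add: prob_space emeasure_eq_measure)
  finally show "expectation U = \<alpha> + \<beta> * prob A" .
qed

lemma expectation_mult_affine_indicator:
  assumes A: "A \<in> events" and B: "B \<in> events"
    and [measurable]: "U \<in> borel_measurable M" "V \<in> borel_measurable M"
    and U: "AE w in M. U w = \<alpha> + \<beta> * indicator A w"
    and V: "AE w in M. V w = \<gamma> + \<delta> * indicator B w"
  shows "expectation (\<lambda>w. U w * V w)
    = \<alpha>*\<gamma> + \<alpha>*\<delta> * prob B + \<beta>*\<gamma> * prob A + \<beta>*\<delta> * prob (A \<inter> B)"
proof -
  let ?W = "\<lambda>w. \<alpha>*\<gamma> + \<alpha>*\<delta> * indicator B w + \<beta>*\<gamma> * indicator A w + \<beta>*\<delta> * indicator (A \<inter> B) w"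
  have "AE w in M. U w * V w = ?W w"
    using U V by eventually_elim (auto simp: indicator_def algebra_simps)
  then have "expectation (\<lambda>w. U w * V w) = expectation ?W"
    using A B by (intro integral_cong_AE) auto
  also have "\<dots> = \<alpha>*\<gamma> + \<alpha>*\<delta> * prob B + \<beta>*\<gamma> * prob A + \<beta>*\<delta> * prob (A \<inter> B)"
    using A B by (simp add: prob_space emeasure_eq_measure)
  finally show ?thesis .
qed

lemma covar_affine_indicator:
  assumes A: "A \<in> events" and B: "B \<in> events"
    and [measurable]: "U \<in> borel_measurable M" "V \<in> borel_measurable M"
    and U: "AE w in M. U w = \<alpha> + \<beta> * indicator A w"
    and V: "AE w in M. V w = \<gamma> + \<delta> * indicator B w"
  shows "covar M U V = \<beta>*\<delta> * (prob (A \<inter> B) - prob A * prob B)"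
proof -
  have EU: "expect M U = \<alpha> + \<beta> * prob A" and EV: "expect M V = \<gamma> + \<delta> * prob B"
    using expectation_affine_indicator[OF A _ U] expectation_affine_indicator[OF B _ V]
    by (simp_all add: expect_def)
  have "covar M U V = expectation (\<lambda>w. (U w - expect M U) * (V w - expect M V))"
    by (simp add: covar_def expect_def)
  also have "\<dots> = (- \<beta> * prob A) * (- \<delta> * prob B) + (- \<beta> * prob A) * \<delta> * prob B
      + \<beta> * (- \<delta> * prob B) * prob A + \<beta>*\<delta> * prob (A \<inter> B)"
  proof (rule expectation_mult_affine_indicator[OF A B])
    show "AE w in M. U w - expect M U = - \<beta> * prob A + \<beta> * indicator A w"
      using U by eventually_elim (simp add: EU)
    show "AE w in M. V w - expect M V = - \<delta> * prob B + \<delta> * indicator B w"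
      using V by eventually_elim (simp add: EV)
  qed auto
  also have "\<dots> = \<beta>*\<delta> * (prob (A \<inter> B) - prob A * prob B)"
    by (simp add: algebra_simps)
  finally show ?thesis .
qed

lemma covar_indicator:
  assumes "A \<in> events" "B \<in> events"
  shows "covar M (indicator A) (indicator B) = prob (A \<inter> B) - prob A * prob B"
  using covar_affine_indicator[of A B "indicator A" "indicator B" 0 1 0 1] assms by simp

lemma corr_affine_indicator:
  assumes A: "A \<in> events" and B: "B \<in> events"
    and [measurable]: "U \<in> borel_measurable M" "V \<in> borel_measurable M"
    and U: "AE w in M. U w = \<alpha> + \<beta> * indicator A w"
    and V: "AE w in M. V w = \<gamma> + \<delta> * indicator B w"
  shows "corr M U V = sgn (\<beta>*\<delta>) * corr M (indicator A) (indicator B)"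
proof -
  let ?cA = "covar M (indicator A) (indicator A)" and ?cB = "covar M (indicator B) (indicator B)"
  have "covar M U U * covar M V V = (\<beta>*\<delta>)\<^sup>2 * (?cA * ?cB)"
    using covar_affine_indicator[OF A A _ _ U U] covar_affine_indicator[OF B B _ _ V V]
    by (simp add: covar_indicator A B power2_eq_square)
  then have "sqrt (covar M U U * covar M V V) = \<bar>\<beta>*\<delta>\<bar> * sqrt (?cA * ?cB)"
    by (simp add: real_sqrt_mult)
  moreover have "covar M U V = \<beta>*\<delta> * covar M (indicator A) (indicator B)"
    using covar_affine_indicator[OF A B _ _ U V] by (simp add: covar_indicator A B)
  ultimately show ?thesis
    by (cases "\<beta>*\<delta> = 0") (simp_all add: corr_def sgn_if)
qed

lemma in_L2_affine_indicator_iff: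
  assumes A: "A \<in> events" and [measurable]: "U \<in> borel_measurable M"
    and U: "AE w in M. U w = \<alpha> + \<beta> * indicator A w"
    and "0 < prob A" "prob A < 1"
  shows "in_L2 M U \<longleftrightarrow> \<beta> \<noteq> 0"
proof
  assume "in_L2 M U"
  then show "\<beta> \<noteq> 0"
    using U by (auto simp: in_L2_def)
next
  assume "\<beta> \<noteq> 0"
  have "AE w in M. (U w)\<^sup>2 = \<alpha>\<^sup>2 + (2*\<alpha>*\<beta> + \<beta>\<^sup>2) * indicator A w"
    using U by eventually_elim (simp add: indicator_def power2_eq_square algebra_simps)
  then have "integrable M (\<lambda>w. (U w)\<^sup>2)"
    using A by (intro integrable_affine_indicator) auto
  moreover have "\<not> (AE w in M. U w = c)" for c
  proof
    assume "AE w in M. U w = c"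
    with U have const: "AE w in M. \<alpha> + \<beta> * indicator A w = c"
      by eventually_elim simp
    have attained: "\<exists>w\<in>S. \<alpha> + \<beta> * indicator A w = c" if "S \<in> events" "prob S > 0" for S
    proof (rule ccontr)
      assume missed: "\<not> (\<exists>w\<in>S. \<alpha> + \<beta> * indicator A w = c)"
      from const have "AE w in M. w \<notin> S"
        by eventually_elim (use missed in auto)
      with that show False
        by (simp flip: prob_eq_0)
    qed
    have "prob (space M - A) > 0"
      using A \<open>prob A < 1\<close> by (simp add: prob_compl)
    then have "\<alpha> + \<beta> = c" "\<alpha> = c"
      using attained[of A] attained[of "space M - A"] A \<open>0 < prob A\<close> by auto
    with \<open>\<beta> \<noteq> 0\<close> show False
      by auto
  qed
  ultimately show "in_L2 M U"
    by (simp add: in_L2_def)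
qed

lemma covar_indicator_square_le:
  assumes A: "A \<in> events" and B: "B \<in> events"
  shows "(covar M (indicator A) (indicator B))\<^sup>2
    \<le> covar M (indicator A) (indicator A) * covar M (indicator B) (indicator B)"
proof -
  \<comment> \<open>the probabilities of the four cells; the difference of the two sides below is a
     polynomial in them with nonnegative coefficients\<close>
  define x where "x = prob (A \<inter> B)"
  define y where "y = prob A - x"
  define z where "z = prob B - x"
  define w where "w = 1 - prob A - prob B + x"
  have "x \<ge> 0" "y \<ge> 0" "z \<ge> 0"
    using A B by (simp_all add: x_def y_def z_def finite_measure_mono)
  moreover have "w \<ge> 0"
    using finite_measure_Union'[OF A B] finite_measure_Diff'[OF B A] prob_le_1[of "A \<union> B"]
    by (simp add: w_def x_def Int_commute)
  ultimately have "(x*w - y*z)\<^sup>2 \<le> (x + y) * (z + w) * ((x + z) * (y + w))"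
    by (simp add: power2_eq_square algebra_simps)
  then show ?thesis
    using A B by (simp add: covar_indicator x_def y_def z_def w_def algebra_simps power2_eq_square)
qed

lemma abs_corr_indicator_le_1:
  assumes "A \<in> events" "B \<in> events"
  shows "\<bar>corr M (indicator A) (indicator B)\<bar> \<le> 1"
proof -
  let ?c = "covar M (indicator A) (indicator B)"
  let ?v = "covar M (indicator A) (indicator A) * covar M (indicator B) (indicator B)"
  have "\<bar>?c\<bar> \<le> sqrt ?v"
    using real_sqrt_le_mono[OF covar_indicator_square_le[OF assms]] by simp
  then show ?thesis
    by (cases "sqrt ?v = 0") (auto simp: corr_def abs_div divide_le_eq_1)
qed

(* Both sides of every product formula are affine in indicator A and indicator B, so the one
   for {b} \<times> {d} implies all others. *)
lemma indep_var_two_point_iff: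
  fixes X Y :: "'a \<Rightarrow> real"
  assumes [measurable]: "X \<in> borel_measurable M" "Y \<in> borel_measurable M"
    and X: "AE w in M. X w = a \<or> X w = b" "a \<noteq> b"
    and Y: "AE w in M. Y w = c \<or> Y w = d" "c \<noteq> d"
  defines "A \<equiv> {w \<in> space M. X w = b}" and "B \<equiv> {w \<in> space M. Y w = d}"
  shows "indep_var borel X borel Y \<longleftrightarrow> prob (A \<inter> B) = prob A * prob B"
  unfolding indep_var_iff_prob_vimage[OF assms(1,2)]
proof (intro iffI ballI)
  assume "\<forall>S\<in>sets borel. \<forall>T\<in>sets borel.
    prob (X -` S \<inter> space M \<inter> (Y -` T \<inter> space M)) = prob (X -` S \<inter> space M) * prob (Y -` T \<inter> space M)"
  from this[rule_format, of "{b}" "{d}"] show "prob (A \<inter> B) = prob A * prob B"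
    by (simp add: A_def B_def vimage_def Int_def conj_commute)
next
  fix S T :: "real set"
  assume indep: "prob (A \<inter> B) = prob A * prob B" and [measurable]: "S \<in> sets borel" "T \<in> sets borel"
  let ?U = "\<lambda>w. indicator S (X w) :: real" and ?V = "\<lambda>w. indicator T (Y w) :: real"
  have events: "A \<in> events" "B \<in> events"
    unfolding A_def B_def by measurable
  have U: "AE w in M. ?U w = indicator S a + (indicator S b - indicator S a) * indicator A w"
    unfolding A_def by (rule AE_comp_eq_affine_indicator[OF X])
  have V: "AE w in M. ?V w = indicator T c + (indicator T d - indicator T c) * indicator B w"
    unfolding B_def by (rule AE_comp_eq_affine_indicator[OF Y])
  have vimage_prob: "prob (X -` S \<inter> space M) = expectation ?U" "prob (Y -` T \<inter> space M) = expectation ?V"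
    "prob (X -` S \<inter> space M \<inter> (Y -` T \<inter> space M)) = expectation (\<lambda>w. ?U w * ?V w)"
    by (simp_all add: Int_ac flip: indicator_vimage indicator_inter_arith)
  have expectations: "expectation ?U = indicator S a + (indicator S b - indicator S a) * prob A"
    "expectation ?V = indicator T c + (indicator T d - indicator T c) * prob B"
    "expectation (\<lambda>w. ?U w * ?V w) = indicator S a * indicator T c
      + indicator S a * (indicator T d - indicator T c) * prob B
      + (indicator S b - indicator S a) * indicator T c * prob A
      + (indicator S b - indicator S a) * (indicator T d - indicator T c) * prob (A \<inter> B)"
    by (intro expectation_affine_indicator expectation_mult_affine_indicator events U V; simp)+
  show "prob (X -` S \<inter> space M \<inter> (Y -` T \<inter> space M)) = prob (X -` S \<inter> space M) * prob (Y -` T \<inter> space M)"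
    unfolding vimage_prob expectations indep by (simp add: algebra_simps)
qed

lemma in_L2_comp_two_point_iff:
  assumes [measurable]: "X \<in> borel_measurable M" "g \<in> borel_measurable borel"
    and support: "support M X = {a, b}" and "a \<noteq> b"
  shows "in_L2 M (g \<circ> X) \<longleftrightarrow> g a \<noteq> g b"
proof -
  note two_point = support_doubletonD[OF assms(1) support \<open>a \<noteq> b\<close>]
  have "in_L2 M (g \<circ> X) \<longleftrightarrow> g b - g a \<noteq> 0"
    using AE_comp_eq_affine_indicator[OF two_point(1) \<open>a \<noteq> b\<close>, of g] two_point(2,3)
    by (intro in_L2_affine_indicator_iff) (auto simp: comp_def)
  then show ?thesis
    by auto
qed

end

lemma borel_orientation_preserved_iff:
  fixes a b c d :: real
  assumes "a < b" "c < d"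
  shows "(\<forall>g :: real \<Rightarrow> real \<in> borel_measurable borel. g a \<noteq> g b \<longrightarrow> g c \<noteq> g d \<longrightarrow>
      0 < (g b - g a) * (g d - g c)) \<longleftrightarrow> {a, b} = {c, d}"
proof
  assume preserved: "\<forall>g :: real \<Rightarrow> real \<in> borel_measurable borel. g a \<noteq> g b \<longrightarrow> g c \<noteq> g d \<longrightarrow>
      0 < (g b - g a) * (g d - g c)"
  show "{a, b} = {c, d}"
  proof (rule ccontr)
    assume "{a, b} \<noteq> {c, d}"
    then obtain p t where p: "p \<notin> {a, b}" and reversed: "(if d = p then t else d) < (if c = p then t else c)"
    proof (cases "c \<in> {a, b}")
      case True
      then have "d \<notin> {a, b}"
        using \<open>{a, b} \<noteq> {c, d}\<close> \<open>a < b\<close> \<open>c < d\<close> by (auto simp: doubleton_eq_iff)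
      then show ?thesis
        using that[of d "c - 1"] \<open>c < d\<close> by auto
    next
      case False
      then show ?thesis
        using that[of c "d + 1"] \<open>c < d\<close> by auto
    qed
    \<comment> \<open>g moves the point p of {c, d} past the other one and fixes a and b\<close>
    define g where "g x = (if x = p then t else x)" for x :: real
    have "g \<in> borel_measurable borel"
      unfolding g_def by measurable
    moreover have "g a = a" "g b = b" "g d < g c"
      using p reversed by (auto simp: g_def)
    ultimately have "0 < (b - a) * (g d - g c)"
      using preserved \<open>a < b\<close> by force
    with \<open>a < b\<close> \<open>g d < g c\<close> show False
      by (simp add: zero_less_mult_iff)
  qed
next
  assume "{a, b} = {c, d}"
  then have "a = c" "b = d"
    using assms by (auto simp: doubleton_eq_iff)
  then show "\<forall>g :: real \<Rightarrow> real \<in> borel_measurable borel. g a \<noteq> g b \<longrightarrow> g c \<noteq> g d \<longrightarrow>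
      0 < (g b - g a) * (g d - g c)"
    by (auto simp: zero_less_mult_iff)
qed

locale two_point_pair = prob_space +
  fixes X Y :: "'a \<Rightarrow> real" and a b c d :: real
  assumes measurable_X[measurable]: "X \<in> borel_measurable M"
    and measurable_Y[measurable]: "Y \<in> borel_measurable M"
    and support_X: "support M X = {a, b}" and a_less_b: "a < b"
    and support_Y: "support M Y = {c, d}" and c_less_d: "c < d"
begin

abbreviation "A \<equiv> {w \<in> space M. X w = b}"
abbreviation "B \<equiv> {w \<in> space M. Y w = d}"

lemma events_A_B: "A \<in> events" "B \<in> events"
  by measurable

lemma AE_two_point: "AE w in M. X w = a \<or> X w = b" "AE w in M. Y w = c \<or> Y w = d"
  using support_doubletonD(1)[OF _ support_X] support_doubletonD(1)[OF _ support_Y] a_less_b c_less_d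
  by auto

lemma prob_A_B_strict_bounds: "0 < prob A" "prob A < 1" "0 < prob B" "prob B < 1"
  using support_doubletonD(2,3)[OF _ support_X] support_doubletonD(2,3)[OF _ support_Y] a_less_b c_less_d
  by auto

lemma corr_comp_eq_sgn_mult_corr_indicator:
  assumes [measurable]: "g \<in> borel_measurable borel"
  shows "corr M (g \<circ> X) (g \<circ> Y) = sgn ((g b - g a) * (g d - g c)) * corr M (indicator A) (indicator B)"
  using AE_comp_eq_affine_indicator[OF AE_two_point(1), of g] AE_comp_eq_affine_indicator[OF AE_two_point(2), of g]
    a_less_b c_less_d by (intro corr_affine_indicator events_A_B) (auto simp: comp_def)

lemma corr_eq_corr_indicator: "corr M X Y = corr M (indicator A) (indicator B)"
  using corr_comp_eq_sgn_mult_corr_indicator[of id] a_less_b c_less_d by simp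

lemma corr_comp:
  assumes "g \<in> borel_measurable borel"
  shows "corr M (g \<circ> X) (g \<circ> Y) = sgn ((g b - g a) * (g d - g c)) * corr M X Y"
  using corr_comp_eq_sgn_mult_corr_indicator[OF assms] by (simp add: corr_eq_corr_indicator)

lemma corr_eq_0_iff_indep_var: "corr M X Y = 0 \<longleftrightarrow> indep_var borel X borel Y"
  unfolding corr_eq_corr_indicator indep_var_two_point_iff[OF measurable_X measurable_Y
      AE_two_point(1) less_imp_neq[OF a_less_b] AE_two_point(2) less_imp_neq[OF c_less_d]]
  using prob_A_B_strict_bounds by (simp add: corr_def covar_indicator events_A_B)

lemma IC_iff_corr_eq_0_or_orientation_preserved:
  "IC M X Y \<longleftrightarrow> corr M X Y = 0 \<or>
    (\<forall>g :: real \<Rightarrow> real \<in> borel_measurable borel. g a \<noteq> g b \<longrightarrow> g c \<noteq> g d \<longrightarrow> 0 < (g b - g a) * (g d - g c))"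
  (is "_ \<longleftrightarrow> ?rhs")
proof -
  have in_L2_comp: "in_L2 M (g \<circ> X) \<longleftrightarrow> g a \<noteq> g b" "in_L2 M (g \<circ> Y) \<longleftrightarrow> g c \<noteq> g d"
    if "g \<in> borel_measurable borel" for g
    using in_L2_comp_two_point_iff[OF measurable_X that support_X] in_L2_comp_two_point_iff[OF measurable_Y that support_Y]
      a_less_b c_less_d by auto
  then have "in_L2 M X" "in_L2 M Y"
    using in_L2_comp[of id] a_less_b c_less_d by auto
  moreover have "corr M X Y \<in> {-1..1}"
    using abs_corr_indicator_le_1[OF events_A_B] by (simp add: corr_eq_corr_indicator abs_le_iff)
  ultimately have "IC M X Y \<longleftrightarrow> (\<forall>g\<in>borel_measurable borel. g a \<noteq> g b \<longrightarrow> g c \<noteq> g d \<longrightarrow>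
      sgn ((g b - g a) * (g d - g c)) * corr M X Y = corr M X Y)"
    by (auto simp: IC_def IC_r_def in_L2_comp corr_comp)
  also have "\<dots> \<longleftrightarrow> ?rhs"
    by (cases "corr M X Y = 0") (simp_all add: sgn_1_pos del: sgn_mult)
  finally show ?thesis .
qed

end

theorem proposition5:
  fixes M :: "'a measure" and X Y :: "'a \<Rightarrow> real"
  assumes "prob_space M"
    and "X \<in> borel_measurable M" and "Y \<in> borel_measurable M"
    and "bi_atomic M X" and "bi_atomic M Y"
  shows "IC M X Y \<longleftrightarrow>
           (support M X = support M Y \<or> prob_space.indep_var M borel X borel Y)"
proof -
  obtain a b where X: "support M X = {a, b}" "a < b"
    using bi_atomicE[OF assms(4)] .
  obtain c d where Y: "support M Y = {c, d}" "c < d"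
    using bi_atomicE[OF assms(5)] .
  interpret two_point_pair M X Y a b c d
    by (intro two_point_pair.intro two_point_pair_axioms.intro assms X Y)
  have "IC M X Y \<longleftrightarrow> indep_var borel X borel Y \<or> {a, b} = {c, d}"
    unfolding IC_iff_corr_eq_0_or_orientation_preserved corr_eq_0_iff_indep_var
      borel_orientation_preserved_iff[OF \<open>a < b\<close> \<open>c < d\<close>] ..
  then show ?thesis
    using X Y by auto
qed

end
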